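(* Let $G$ be a finite group, $N\trianglelefteq G$, and $H=\Delta_G(1\times N)=\{(gn,g):g\in G,n\in N\}$. Then the assignment sending a pair $(\lambda,\mu)$ to the 2-cocycle $\psi((gn,g),(kn',k)):=\mu(n^k,n')/\lambda(k,n)$ induces a group isomorphism $\Lambda(G,N)\cong\mathcal{G}(G,N)$, whose inverse sends $[\psi]$ (with $\psi$ well-chosen) to the class of $\lambda(g,n)=\beta^\psi_{(g,g)}((n,1))$, $\mu(n,n')=\psi((n,1),(n',1))$.
   Context: $n^g=g^{-1}ng$. For $\psi\in Z^2(X;\mathbb{T})$, $\beta^\psi_x(y)=\psi(x,x^{-1}yx)\overline{\psi(y,x)}$. Jones' characteristic invariant $\Lambda(G,N)$: let $Z$ be the abelian group (under pointwise multiplication) of pairs $(\lambda,\mu)$, $\lambda:G\times N\to\mathbb{T}$, $\mu\in Z^2(N;\mathbb{T})$, satisfying for all $m,n\in N$, $g,h\in G$: $\lambda(m,n)=\mu(m,n^m)\overline{\mu(n,m)}$; $\lambda(gh,n)=\lambda(g,n)\lambda(h,n^g)$; $\lambda(g,mn)\overline{\lambda(g,m)\lambda(g,n)}=\mu(m,n)\overline{\mu(m^g,n^g)}$; $\lambda(1,n)=\lambda(g,1)=\mu(1,n)=\mu(n,1)=1$. For $\eta:N\to\mathbb{T}$ with $\eta(1)=1$ let $\lambda_\eta(g,n)=\eta(n)\overline{\eta(n^g)}$, $\mu_\eta(n,n')=\eta(nn')\overline{\eta(n)\eta(n')}$; $\Lambda(G,N)$ is $Z$ modulo the subgroup of all $(\lambda_\eta,\mu_\eta)$.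 $\mathcal{G}(G,N)$ is the subgroup of $H^2(H;\mathbb{T})$ of classes $[\psi]$ with $[\psi|_{\Delta_G}]=1$ and $\beta^\psi_{(n,1)}((1,n'))=1$ for all $n,n'\in N$. A cocycle $\psi\in Z^2(H;\mathbb{T})$ is well-chosen if $\psi(\Delta_G,H)=1$ and $\beta^\psi_{(n,1)}((1,n'))=1$ for all $n,n'\in N$; every class in $\mathcal{G}(G,N)$ contains a well-chosen cocycle. *)

theory Defs
  imports Complex_Main "HOL-Algebra.Algebra"
begin

definition circle :: "complex set" where
  "circle = {z. cmod z = 1}"

text \<open>Conjugation convention: n^g = g^{-1} n g.\<close>
definition conjg :: "('g,'m) monoid_scheme \<Rightarrow> 'g \<Rightarrow> 'g \<Rightarrow> 'g" where
  "conjg K n g = m_inv K g \<otimes>\<^bsub>K\<^esub> n \<otimes>\<^bsub>K\<^esub> g"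

text \<open>Z^2(K;T): (inhomogeneous) 2-cocycles K x K -> T, only the values on the carrier matter.\<close>
definition cocycles :: "('g,'m) monoid_scheme \<Rightarrow> ('g \<Rightarrow> 'g \<Rightarrow> complex) set" where
  "cocycles K = {\<psi>. (\<forall>x\<in>carrier K. \<forall>y\<in>carrier K. \<psi> x y \<in> circle) \<and>
     (\<forall>x\<in>carrier K. \<forall>y\<in>carrier K. \<forall>z\<in>carrier K.
        \<psi> x y * \<psi> (x \<otimes>\<^bsub>K\<^esub> y) z = \<psi> y z * \<psi> x (y \<otimes>\<^bsub>K\<^esub> z))}"

definition cohomologous :: "('g,'m) monoid_scheme \<Rightarrow> ('g \<Rightarrow> 'g \<Rightarrow> complex) \<Rightarrow> ('g \<Rightarrow> 'g \<Rightarrow> complex) \<Rightarrow> bool" where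
  "cohomologous K \<psi> \<psi>' \<longleftrightarrow> (\<exists>\<eta>. (\<forall>x\<in>carrier K. \<eta> x \<in> circle) \<and>
     (\<forall>x\<in>carrier K. \<forall>y\<in>carrier K. \<psi>' x y = \<psi> x y * \<eta> x * \<eta> y / \<eta> (x \<otimes>\<^bsub>K\<^esub> y)))"

definition coh_class :: "('g,'m) monoid_scheme \<Rightarrow> ('g \<Rightarrow> 'g \<Rightarrow> complex) \<Rightarrow> ('g \<Rightarrow> 'g \<Rightarrow> complex) set" where
  "coh_class K \<psi> = {\<psi>' \<in> cocycles K. cohomologous K \<psi> \<psi>'}"

definition H2 :: "('g,'m) monoid_scheme \<Rightarrow> ('g \<Rightarrow> 'g \<Rightarrow> complex) set monoid" where
  "H2 K = \<lparr> carrier = coh_class K ` cocycles K,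
            monoid.mult = (\<lambda>A B. coh_class K (\<lambda>x y. (SOME a. a \<in> A) x y * (SOME b. b \<in> B) x y)),
            monoid.one = coh_class K (\<lambda>x y. 1) \<rparr>"

definition beta :: "('g,'m) monoid_scheme \<Rightarrow> ('g \<Rightarrow> 'g \<Rightarrow> complex) \<Rightarrow> 'g \<Rightarrow> 'g \<Rightarrow> complex" where
  "beta K \<psi> x y = \<psi> x (m_inv K x \<otimes>\<^bsub>K\<^esub> y \<otimes>\<^bsub>K\<^esub> x) * cnj (\<psi> y x)"

definition Hset :: "('a,'b) monoid_scheme \<Rightarrow> 'a set \<Rightarrow> ('a \<times> 'a) set" where
  "Hset G N = {(g \<otimes>\<^bsub>G\<^esub> n, g) | g n. g \<in> carrier G \<and> n \<in> N}"

definition Hgrp :: "('a,'b) monoid_scheme \<Rightarrow> 'a set \<Rightarrow> ('a \<times> 'a) monoid" where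
  "Hgrp G N = (G \<times>\<times> G)\<lparr>carrier := Hset G N\<rparr>"

definition Delta :: "('a,'b) monoid_scheme \<Rightarrow> ('a \<times> 'a) monoid" where
  "Delta G = (G \<times>\<times> G)\<lparr>carrier := {(g, g) | g. g \<in> carrier G}\<rparr>"

definition GGN_carrier :: "('a,'b) monoid_scheme \<Rightarrow> 'a set \<Rightarrow> (('a \<times> 'a) \<Rightarrow> ('a \<times> 'a) \<Rightarrow> complex) set set" where
  "GGN_carrier G N = {C \<in> carrier (H2 (Hgrp G N)). \<exists>\<psi>. \<psi> \<in> cocycles (Hgrp G N) \<and> C = coh_class (Hgrp G N) \<psi>
       \<and> cohomologous (Delta G) (\<lambda>x y. 1) \<psi>
       \<and> (\<forall>n\<in>N. \<forall>n'\<in>N. beta (Hgrp G N) \<psi> (n, \<one>\<^bsub>G\<^esub>) (\<one>\<^bsub>G\<^esub>, n') = 1)}"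

definition GGN :: "('a,'b) monoid_scheme \<Rightarrow> 'a set \<Rightarrow> (('a \<times> 'a) \<Rightarrow> ('a \<times> 'a) \<Rightarrow> complex) set monoid" where
  "GGN G N = (H2 (Hgrp G N))\<lparr>carrier := GGN_carrier G N\<rparr>"

definition well_chosen :: "('a,'b) monoid_scheme \<Rightarrow> 'a set \<Rightarrow> (('a \<times> 'a) \<Rightarrow> ('a \<times> 'a) \<Rightarrow> complex) \<Rightarrow> bool" where
  "well_chosen G N \<psi> \<longleftrightarrow> \<psi> \<in> cocycles (Hgrp G N)
     \<and> (\<forall>g\<in>carrier G. \<forall>h\<in>Hset G N. \<psi> (g, g) h = 1)
     \<and> (\<forall>n\<in>N. \<forall>n'\<in>N. beta (Hgrp G N) \<psi> (n, \<one>\<^bsub>G\<^esub>) (\<one>\<^bsub>G\<^esub>, n') = 1)"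

type_synonym 'a lampair = "('a \<Rightarrow> 'a \<Rightarrow> complex) \<times> ('a \<Rightarrow> 'a \<Rightarrow> complex)"

definition Zpairs :: "('a,'b) monoid_scheme \<Rightarrow> 'a set \<Rightarrow> 'a lampair set" where
  "Zpairs G N = {(la, mu).
     (\<forall>g\<in>carrier G. \<forall>n\<in>N. la g n \<in> circle) \<and>
     mu \<in> cocycles (G\<lparr>carrier := N\<rparr>) \<and>
     (\<forall>m\<in>N. \<forall>n\<in>N. la m n = mu m (conjg G n m) * cnj (mu n m)) \<and>
     (\<forall>g\<in>carrier G. \<forall>h\<in>carrier G. \<forall>n\<in>N. la (g \<otimes>\<^bsub>G\<^esub> h) n = la g n * la h (conjg G n g)) \<and>
     (\<forall>g\<in>carrier G. \<forall>m\<in>N. \<forall>n\<in>N.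
        la g (m \<otimes>\<^bsub>G\<^esub> n) * cnj (la g m * la g n) = mu m n * cnj (mu (conjg G m g) (conjg G n g))) \<and>
     (\<forall>n\<in>N. la \<one>\<^bsub>G\<^esub> n = 1) \<and> (\<forall>g\<in>carrier G. la g \<one>\<^bsub>G\<^esub> = 1) \<and>
     (\<forall>n\<in>N. mu \<one>\<^bsub>G\<^esub> n = 1) \<and> (\<forall>n\<in>N. mu n \<one>\<^bsub>G\<^esub> = 1)}"

definition lam_equiv :: "('a,'b) monoid_scheme \<Rightarrow> 'a set \<Rightarrow> 'a lampair \<Rightarrow> 'a lampair \<Rightarrow> bool" where
  "lam_equiv G N p q \<longleftrightarrow> (\<exists>\<eta>. (\<forall>n\<in>N. \<eta> n \<in> circle) \<and> \<eta> \<one>\<^bsub>G\<^esub> = 1 \<and>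
     (\<forall>g\<in>carrier G. \<forall>n\<in>N. fst q g n = fst p g n * (\<eta> n * cnj (\<eta> (conjg G n g)))) \<and>
     (\<forall>n\<in>N. \<forall>n'\<in>N. snd q n n' = snd p n n' * (\<eta> (n \<otimes>\<^bsub>G\<^esub> n') * cnj (\<eta> n * \<eta> n'))))"

definition lam_class :: "('a,'b) monoid_scheme \<Rightarrow> 'a set \<Rightarrow> 'a lampair \<Rightarrow> 'a lampair set" where
  "lam_class G N p = {q \<in> Zpairs G N. lam_equiv G N p q}"

definition Lambda :: "('a,'b) monoid_scheme \<Rightarrow> 'a set \<Rightarrow> 'a lampair set monoid" where
  "Lambda G N = \<lparr> carrier = lam_class G N ` Zpairs G N,
     monoid.mult = (\<lambda>A B. lam_class G N
        (let p = (SOME p. p \<in> A); q = (SOME q. q \<in> B)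
         in (\<lambda>g n. fst p g n * fst q g n, \<lambda>n n'. snd p n n' * snd q n n'))),
     monoid.one = lam_class G N (\<lambda>g n. 1, \<lambda>n n'. 1) \<rparr>"

text \<open>\<psi>((gn,g),(kn',k)) = \<mu>(n^k, n') / \<lambda>(k, n); for (a,b) in H we have g = b, n = b^{-1} a.\<close>
definition psi_of :: "('a,'b) monoid_scheme \<Rightarrow> 'a lampair \<Rightarrow> ('a \<times> 'a) \<Rightarrow> ('a \<times> 'a) \<Rightarrow> complex" where
  "psi_of G p x y =
     (let g = snd x; n = m_inv G (snd x) \<otimes>\<^bsub>G\<^esub> fst x;
          k = snd y; n' = m_inv G (snd y) \<otimes>\<^bsub>G\<^esub> fst y
      in snd p (conjg G n k) n' / fst p k n)"

definition lam_of :: "('a,'b) monoid_scheme \<Rightarrow> 'a set \<Rightarrow> (('a \<times> 'a) \<Rightarrow> ('a \<times> 'a) \<Rightarrow> complex) \<Rightarrow> 'a lampair" where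
  "lam_of G N \<psi> = (\<lambda>g n. beta (Hgrp G N) \<psi> (g, g) (n, \<one>\<^bsub>G\<^esub>), \<lambda>n n'. \<psi> (n, \<one>\<^bsub>G\<^esub>) (n', \<one>\<^bsub>G\<^esub>))"

end

theory Submission
  imports Defs
begin

(* A cocycle on H = \<Delta>\<^sub>G(1 \<times> N) whose restriction to \<Delta>\<^sub>G is a coboundary can be twisted,
   first by a coboundary pulled back along (gn, g) \<mapsto> g and then by x \<mapsto> \<psi>((g, g), (n, 1)) for
   x = (gn, g), until it vanishes on \<Delta>\<^sub>G \<times> H. Such a well-chosen \<psi> satisfies
   \<psi>((gn, g), (kn', k)) = \<psi>((n, 1), (k, k)) \<psi>((n\<^sup>k, 1), (n', 1)), so it is the cocycle attached to
   \<lambda>(k, n) = 1 / \<psi>((n, 1), (k, k)) and \<mu>(n, n') = \<psi>((n, 1), (n', 1)); the cocycle identity of \<psi>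
   on the relevant triples is exactly the list of identities defining \<Lambda>(G, N). Conversely a
   coboundary between two cocycles of this form restricts, on N \<times> 1, to an \<eta> relating the
   pairs, so the correspondence is bijective on classes. *)

lemma circle_nonzero: "z \<in> circle \<Longrightarrow> z \<noteq> 0"
  by (auto simp: circle_def)

lemma circle_mult: "a \<in> circle \<Longrightarrow> b \<in> circle \<Longrightarrow> a * b \<in> circle"
  by (simp add: circle_def norm_mult)

lemma circle_cnj: "a \<in> circle \<Longrightarrow> cnj a \<in> circle"
  by (simp add: circle_def)

lemma circle_divide: "a \<in> circle \<Longrightarrow> b \<in> circle \<Longrightarrow> a / b \<in> circle"
  by (simp add: circle_def norm_divide)

lemma circle_one [simp]: "1 \<in> circle"
  by (simp add: circle_def)

lemma cnj_circle: "a \<in> circle \<Longrightarrow> cnj a = 1 / a"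
proof -
  assume a: "a \<in> circle"
  have "a * cnj a = 1" using a complex_norm_square[of a] by (simp add: circle_def)
  thus ?thesis using circle_nonzero[OF a] by (simp add: field_simps)
qed

lemma cocyclesD:
  assumes "\<psi> \<in> cocycles K" "x \<in> carrier K" "y \<in> carrier K"
  shows "\<psi> x y \<in> circle"
    and "z \<in> carrier K \<Longrightarrow> \<psi> x y * \<psi> (x \<otimes>\<^bsub>K\<^esub> y) z = \<psi> y z * \<psi> x (y \<otimes>\<^bsub>K\<^esub> z)"
  using assms unfolding cocycles_def by blast+

lemma cohomologousI:
  assumes "\<And>x. x \<in> carrier K \<Longrightarrow> \<eta> x \<in> circle"
    and "\<And>x y. x \<in> carrier K \<Longrightarrow> y \<in> carrier K \<Longrightarrow> \<psi>' x y = \<psi> x y * \<eta> x * \<eta> y / \<eta> (x \<otimes>\<^bsub>K\<^esub> y)"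
  shows "cohomologous K \<psi> \<psi>'"
  using assms unfolding cohomologous_def by blast

lemma cohomologousE:
  assumes "cohomologous K \<psi> \<psi>'"
  obtains \<eta> where "\<And>x. x \<in> carrier K \<Longrightarrow> \<eta> x \<in> circle"
    and "\<And>x y. x \<in> carrier K \<Longrightarrow> y \<in> carrier K \<Longrightarrow> \<psi>' x y = \<psi> x y * \<eta> x * \<eta> y / \<eta> (x \<otimes>\<^bsub>K\<^esub> y)"
  using assms unfolding cohomologous_def by blast

lemma cohomologous_if_agree:
  "(\<And>x y. x \<in> carrier K \<Longrightarrow> y \<in> carrier K \<Longrightarrow> \<psi>' x y = \<psi> x y) \<Longrightarrow> cohomologous K \<psi> \<psi>'"
  by (rule cohomologousI[of K "\<lambda>_. 1"]) simp_all

lemma cohomologous_refl: "cohomologous K \<psi> \<psi>"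
  by (rule cohomologous_if_agree) simp

lemma cohomologous_sym:
  assumes "monoid K" "cohomologous K \<psi> \<psi>'"
  shows "cohomologous K \<psi>' \<psi>"
proof -
  obtain \<eta> where \<eta>: "\<And>x. x \<in> carrier K \<Longrightarrow> \<eta> x \<in> circle"
    and \<psi>': "\<And>x y. x \<in> carrier K \<Longrightarrow> y \<in> carrier K \<Longrightarrow> \<psi>' x y = \<psi> x y * \<eta> x * \<eta> y / \<eta> (x \<otimes>\<^bsub>K\<^esub> y)"
    by (rule cohomologousE[OF assms(2)]) blast
  show ?thesis
  proof (rule cohomologousI[of K "\<lambda>x. 1 / \<eta> x"])
    fix x y assume xy: "x \<in> carrier K" "y \<in> carrier K"
    hence "x \<otimes>\<^bsub>K\<^esub> y \<in> carrier K" using monoid.m_closed[OF assms(1)] by blast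
    thus "\<psi> x y = \<psi>' x y * (1 / \<eta> x) * (1 / \<eta> y) / (1 / \<eta> (x \<otimes>\<^bsub>K\<^esub> y))"
      using xy \<eta> circle_nonzero by (simp add: \<psi>' field_simps)
  qed (simp add: \<eta> circle_divide)
qed

lemma cohomologous_mult:
  assumes "cohomologous K \<psi>1 \<psi>1'" "cohomologous K \<psi>2 \<psi>2'"
  shows "cohomologous K (\<lambda>x y. \<psi>1 x y * \<psi>2 x y) (\<lambda>x y. \<psi>1' x y * \<psi>2' x y)"
proof -
  obtain \<eta> where \<eta>: "\<And>x. x \<in> carrier K \<Longrightarrow> \<eta> x \<in> circle"
    and \<psi>1': "\<And>x y. x \<in> carrier K \<Longrightarrow> y \<in> carrier K \<Longrightarrow> \<psi>1' x y = \<psi>1 x y * \<eta> x * \<eta> y / \<eta> (x \<otimes>\<^bsub>K\<^esub> y)"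
    by (rule cohomologousE[OF assms(1)]) blast
  obtain \<zeta> where \<zeta>: "\<And>x. x \<in> carrier K \<Longrightarrow> \<zeta> x \<in> circle"
    and \<psi>2': "\<And>x y. x \<in> carrier K \<Longrightarrow> y \<in> carrier K \<Longrightarrow> \<psi>2' x y = \<psi>2 x y * \<zeta> x * \<zeta> y / \<zeta> (x \<otimes>\<^bsub>K\<^esub> y)"
    by (rule cohomologousE[OF assms(2)]) blast
  show ?thesis
    by (rule cohomologousI[of K "\<lambda>x. \<eta> x * \<zeta> x"])
      (simp_all add: \<eta> \<zeta> circle_mult \<psi>1' \<psi>2' divide_inverse mult_ac inverse_mult_distrib)
qed

lemma cohomologous_trans:
  assumes "cohomologous K \<psi>1 \<psi>2" "cohomologous K \<psi>2 \<psi>3"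
  shows "cohomologous K \<psi>1 \<psi>3"
proof -
  obtain \<eta> where \<eta>: "\<And>x. x \<in> carrier K \<Longrightarrow> \<eta> x \<in> circle"
    and \<psi>2: "\<And>x y. x \<in> carrier K \<Longrightarrow> y \<in> carrier K \<Longrightarrow> \<psi>2 x y = \<psi>1 x y * \<eta> x * \<eta> y / \<eta> (x \<otimes>\<^bsub>K\<^esub> y)"
    by (rule cohomologousE[OF assms(1)]) blast
  obtain \<zeta> where \<zeta>: "\<And>x. x \<in> carrier K \<Longrightarrow> \<zeta> x \<in> circle"
    and \<psi>3: "\<And>x y. x \<in> carrier K \<Longrightarrow> y \<in> carrier K \<Longrightarrow> \<psi>3 x y = \<psi>2 x y * \<zeta> x * \<zeta> y / \<zeta> (x \<otimes>\<^bsub>K\<^esub> y)"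
    by (rule cohomologousE[OF assms(2)]) blast
  show ?thesis
    by (rule cohomologousI[of K "\<lambda>x. \<eta> x * \<zeta> x"])
      (simp_all add: \<eta> \<zeta> circle_mult \<psi>2 \<psi>3 divide_inverse mult_ac inverse_mult_distrib)
qed

lemma cocycles_mult:
  assumes "\<psi> \<in> cocycles K" "\<psi>' \<in> cocycles K"
  shows "(\<lambda>x y. \<psi> x y * \<psi>' x y) \<in> cocycles K"
  unfolding cocycles_def
proof (intro CollectI conjI ballI)
  fix x y z assume xyz: "x \<in> carrier K" "y \<in> carrier K" "z \<in> carrier K"
  have "\<psi> x y * \<psi>' x y * (\<psi> (x \<otimes>\<^bsub>K\<^esub> y) z * \<psi>' (x \<otimes>\<^bsub>K\<^esub> y) z)
      = (\<psi> x y * \<psi> (x \<otimes>\<^bsub>K\<^esub> y) z) * (\<psi>' x y * \<psi>' (x \<otimes>\<^bsub>K\<^esub> y) z)"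
    by (simp only: mult_ac)
  also have "\<dots> = (\<psi> y z * \<psi> x (y \<otimes>\<^bsub>K\<^esub> z)) * (\<psi>' y z * \<psi>' x (y \<otimes>\<^bsub>K\<^esub> z))"
    using cocyclesD(2)[OF assms(1) xyz] cocyclesD(2)[OF assms(2) xyz] by simp
  finally show "\<psi> x y * \<psi>' x y * (\<psi> (x \<otimes>\<^bsub>K\<^esub> y) z * \<psi>' (x \<otimes>\<^bsub>K\<^esub> y) z)
      = \<psi> y z * \<psi>' y z * (\<psi> x (y \<otimes>\<^bsub>K\<^esub> z) * \<psi>' x (y \<otimes>\<^bsub>K\<^esub> z))"
    by (simp only: mult_ac)
qed (use assms in \<open>simp add: cocyclesD circle_mult\<close>)

lemma cocycles_cohomologous:
  assumes "monoid K" "\<psi> \<in> cocycles K" "cohomologous K \<psi> \<psi>'"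
  shows "\<psi>' \<in> cocycles K"
proof -
  interpret K: monoid K by fact
  obtain \<eta> where \<eta>: "\<And>x. x \<in> carrier K \<Longrightarrow> \<eta> x \<in> circle"
    and \<psi>': "\<And>x y. x \<in> carrier K \<Longrightarrow> y \<in> carrier K \<Longrightarrow> \<psi>' x y = \<psi> x y * \<eta> x * \<eta> y / \<eta> (x \<otimes>\<^bsub>K\<^esub> y)"
    by (rule cohomologousE[OF assms(3)]) blast
  have \<eta>_nonzero: "\<And>x. x \<in> carrier K \<Longrightarrow> \<eta> x \<noteq> 0"
    using \<eta> circle_nonzero by blast
  show ?thesis
    unfolding cocycles_def
  proof (intro CollectI conjI ballI)
    fix x y z assume xyz: "x \<in> carrier K" "y \<in> carrier K" "z \<in> carrier K"
    define c where "c = \<eta> x * \<eta> y * \<eta> z / \<eta> (x \<otimes>\<^bsub>K\<^esub> y \<otimes>\<^bsub>K\<^esub> z)"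
    have "\<psi>' x y * \<psi>' (x \<otimes>\<^bsub>K\<^esub> y) z = (\<psi> x y * \<psi> (x \<otimes>\<^bsub>K\<^esub> y) z) * c"
      using xyz \<eta>_nonzero by (simp add: \<psi>' c_def field_simps)
    also have "\<dots> = (\<psi> y z * \<psi> x (y \<otimes>\<^bsub>K\<^esub> z)) * c"
      using cocyclesD(2)[OF assms(2) xyz] by simp
    also have "\<dots> = \<psi>' y z * \<psi>' x (y \<otimes>\<^bsub>K\<^esub> z)"
      using xyz \<eta>_nonzero by (simp add: \<psi>' c_def K.m_assoc field_simps)
    finally show "\<psi>' x y * \<psi>' (x \<otimes>\<^bsub>K\<^esub> y) z = \<psi>' y z * \<psi>' x (y \<otimes>\<^bsub>K\<^esub> z)" .
  qed (use assms(2) in \<open>simp add: \<psi>' \<eta> cocyclesD circle_mult circle_divide\<close>)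
qed

lemma in_coh_class: "\<psi> \<in> cocycles K \<Longrightarrow> \<psi> \<in> coh_class K \<psi>"
  by (simp add: coh_class_def cohomologous_refl)

lemma coh_class_eq:
  assumes "monoid K" "cohomologous K \<psi> \<psi>'"
  shows "coh_class K \<psi> = coh_class K \<psi>'"
  unfolding coh_class_def using cohomologous_trans cohomologous_sym[OF assms(1)] assms(2) by blast

lemma cohomologous_if_coh_class_eq:
  assumes "\<psi>' \<in> cocycles K" "coh_class K \<psi> = coh_class K \<psi>'"
  shows "cohomologous K \<psi> \<psi>'"
  using in_coh_class[OF assms(1)] assms(2) unfolding coh_class_def by blast

lemma cohomologous_some_coh_class:
  "\<psi> \<in> cocycles K \<Longrightarrow> cohomologous K \<psi> (SOME \<psi>'. \<psi>' \<in> coh_class K \<psi>)"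
  using someI[of "\<lambda>\<psi>'. \<psi>' \<in> coh_class K \<psi>", OF in_coh_class] by (simp add: coh_class_def)

lemma H2_mult_coh_class:
  assumes "monoid K" "\<psi> \<in> cocycles K" "\<psi>' \<in> cocycles K"
  shows "coh_class K \<psi> \<otimes>\<^bsub>H2 K\<^esub> coh_class K \<psi>' = coh_class K (\<lambda>x y. \<psi> x y * \<psi>' x y)"
proof -
  have "cohomologous K (\<lambda>x y. \<psi> x y * \<psi>' x y)
     (\<lambda>x y. (SOME a. a \<in> coh_class K \<psi>) x y * (SOME b. b \<in> coh_class K \<psi>') x y)"
    using assms by (intro cohomologous_mult cohomologous_some_coh_class)
  thus ?thesis by (simp add: H2_def coh_class_eq[OF assms(1)])
qed

lemma beta_cohomologous:
  assumes "group K" "cohomologous K \<psi> \<psi>'" "x \<in> carrier K" "y \<in> carrier K"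
    and commute: "x \<otimes>\<^bsub>K\<^esub> y = y \<otimes>\<^bsub>K\<^esub> x"
  shows "beta K \<psi>' x y = beta K \<psi> x y"
proof -
  interpret K: group K by fact
  obtain \<eta> where \<eta>: "\<And>x. x \<in> carrier K \<Longrightarrow> \<eta> x \<in> circle"
    and \<psi>': "\<And>x y. x \<in> carrier K \<Longrightarrow> y \<in> carrier K \<Longrightarrow> \<psi>' x y = \<psi> x y * \<eta> x * \<eta> y / \<eta> (x \<otimes>\<^bsub>K\<^esub> y)"
    by (rule cohomologousE[OF assms(2)]) blast
  have "inv\<^bsub>K\<^esub> x \<otimes>\<^bsub>K\<^esub> y \<otimes>\<^bsub>K\<^esub> x = inv\<^bsub>K\<^esub> x \<otimes>\<^bsub>K\<^esub> (x \<otimes>\<^bsub>K\<^esub> y)"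
    using assms(3,4) by (simp add: K.m_assoc commute)
  also have "\<dots> = y"
    using assms(3,4) by (simp add: K.m_assoc[symmetric])
  finally have conj: "inv\<^bsub>K\<^esub> x \<otimes>\<^bsub>K\<^esub> y \<otimes>\<^bsub>K\<^esub> x = y" .
  define c where "c = \<eta> x * \<eta> y / \<eta> (x \<otimes>\<^bsub>K\<^esub> y)"
  have "c \<in> circle" unfolding c_def using \<eta> assms(3,4) by (simp add: circle_mult circle_divide)
  hence "c * cnj c = 1" using cnj_circle circle_nonzero by simp
  moreover have "\<psi>' x y = \<psi> x y * c" "\<psi>' y x = \<psi> y x * c"
    using assms(3,4) by (simp_all add: \<psi>' c_def commute mult_ac)
  ultimately show ?thesis
    unfolding beta_def conj by (simp add: mult_ac)
qed

locale jones = normal N G for N and G (structure)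
begin

lemma N_mult [simp]: "m \<in> N \<Longrightarrow> n \<in> N \<Longrightarrow> m \<otimes> n \<in> N"
  by (rule subgroup.m_closed[OF subgroup_axioms])

lemma N_one [simp]: "\<one> \<in> N"
  by (rule subgroup.one_closed[OF subgroup_axioms])

lemma N_inv [simp]: "n \<in> N \<Longrightarrow> inv n \<in> N"
  by (rule subgroup.m_inv_closed[OF subgroup_axioms])

lemma mult_inv_cancel_left [simp]: "x \<in> carrier G \<Longrightarrow> y \<in> carrier G \<Longrightarrow> x \<otimes> (inv x \<otimes> y) = y"
  by (simp add: m_assoc[symmetric])

lemma inv_mult_cancel_left [simp]: "x \<in> carrier G \<Longrightarrow> y \<in> carrier G \<Longrightarrow> inv x \<otimes> (x \<otimes> y) = y"
  by (simp add: m_assoc[symmetric])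

lemma conjg_closed [simp]: "n \<in> N \<Longrightarrow> g \<in> carrier G \<Longrightarrow> conjg G n g \<in> N"
  unfolding conjg_def by (rule inv_op_closed1)

lemma conjg_conjg:
  "n \<in> carrier G \<Longrightarrow> k \<in> carrier G \<Longrightarrow> l \<in> carrier G \<Longrightarrow> conjg G (conjg G n k) l = conjg G n (k \<otimes> l)"
  unfolding conjg_def by (simp add: inv_mult_group m_assoc)

lemma conjg_mult:
  "m \<in> carrier G \<Longrightarrow> n \<in> carrier G \<Longrightarrow> g \<in> carrier G \<Longrightarrow> conjg G (m \<otimes> n) g = conjg G m g \<otimes> conjg G n g"
  unfolding conjg_def by (simp add: m_assoc)

lemma conjg_by_one [simp]: "n \<in> carrier G \<Longrightarrow> conjg G n \<one> = n"
  unfolding conjg_def by simp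

lemma mult_eq_mult_conjg: "n \<in> carrier G \<Longrightarrow> k \<in> carrier G \<Longrightarrow> n \<otimes> k = k \<otimes> conjg G n k"
  unfolding conjg_def by (simp add: m_assoc)

lemma Hset_mult_normal_form:
  "g \<in> carrier G \<Longrightarrow> n \<in> carrier G \<Longrightarrow> k \<in> carrier G \<Longrightarrow> n' \<in> carrier G \<Longrightarrow>
   g \<otimes> n \<otimes> (k \<otimes> n') = g \<otimes> k \<otimes> (conjg G n k \<otimes> n')"
  unfolding conjg_def by (simp add: m_assoc)

lemma Hset_iff: "(a, b) \<in> Hset G N \<longleftrightarrow> a \<in> carrier G \<and> b \<in> carrier G \<and> inv b \<otimes> a \<in> N"
  unfolding Hset_def
proof safe
  assume "a \<in> carrier G" "b \<in> carrier G" "inv b \<otimes> a \<in> N"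
  thus "\<exists>g n. (a, b) = (g \<otimes> n, g) \<and> g \<in> carrier G \<and> n \<in> N"
    by (intro exI[of _ b] exI[of _ "inv b \<otimes> a"]) simp
qed simp_all

lemma Hset_memI [simp]: "g \<in> carrier G \<Longrightarrow> n \<in> N \<Longrightarrow> (g \<otimes> n, g) \<in> Hset G N"
  unfolding Hset_def by blast

lemma HsetE:
  assumes "x \<in> Hset G N"
  obtains g n where "x = (g \<otimes> n, g)" "g \<in> carrier G" "n \<in> N"
  using assms unfolding Hset_def by blast

lemma diag_in_Hset [simp]: "g \<in> carrier G \<Longrightarrow> (g, g) \<in> Hset G N"
  by (simp add: Hset_iff)

lemma N_left_in_Hset [simp]: "n \<in> N \<Longrightarrow> (n, \<one>) \<in> Hset G N"
  by (simp add: Hset_iff)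

lemma N_right_in_Hset [simp]: "n \<in> N \<Longrightarrow> (\<one>, n) \<in> Hset G N"
  by (simp add: Hset_iff)

lemma subgroup_Hset: "subgroup (Hset G N) (G \<times>\<times> G)"
proof
  fix x y assume "x \<in> Hset G N" "y \<in> Hset G N"
  then obtain g n k n' where "x = (g \<otimes> n, g)" "y = (k \<otimes> n', k)"
    and gnkn': "g \<in> carrier G" "n \<in> N" "k \<in> carrier G" "n' \<in> N" by (metis HsetE)
  hence "x \<otimes>\<^bsub>G \<times>\<times> G\<^esub> y = (g \<otimes> k \<otimes> (conjg G n k \<otimes> n'), g \<otimes> k)"
    using Hset_mult_normal_form[of g n k n'] by simp
  thus "x \<otimes>\<^bsub>G \<times>\<times> G\<^esub> y \<in> Hset G N"
    using gnkn' by simp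
next
  fix x assume "x \<in> Hset G N"
  then obtain g n where x: "x = (g \<otimes> n, g)" "g \<in> carrier G" "n \<in> N" by (metis HsetE)
  have "inv (inv g) \<otimes> (inv n \<otimes> inv g) = g \<otimes> inv n \<otimes> inv g" using x by (simp add: m_assoc)
  moreover have "g \<otimes> inv n \<otimes> inv g \<in> N" using x by (simp add: inv_op_closed2)
  ultimately show "inv\<^bsub>G \<times>\<times> G\<^esub> x \<in> Hset G N"
    using x by (simp add: inv_DirProd[OF is_group is_group] inv_mult_group Hset_iff)
qed (auto simp: Hset_iff)

lemma group_Hgrp: "group (Hgrp G N)"
  unfolding Hgrp_def by (rule subgroup.subgroup_is_group[OF subgroup_Hset DirProd_group[OF is_group is_group]])

lemma monoid_Hgrp: "monoid (Hgrp G N)"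
  using group_Hgrp group.is_monoid by blast

lemma Hgrp_carrier [simp]: "carrier (Hgrp G N) = Hset G N"
  by (simp add: Hgrp_def)

lemma Hgrp_mult [simp]: "(a, b) \<otimes>\<^bsub>Hgrp G N\<^esub> (c, d) = (a \<otimes> c, b \<otimes> d)"
  by (simp add: Hgrp_def)

lemma Hgrp_one [simp]: "\<one>\<^bsub>Hgrp G N\<^esub> = (\<one>, \<one>)"
  by (simp add: Hgrp_def)

lemma Hgrp_inv [simp]: "(a, b) \<in> Hset G N \<Longrightarrow> inv\<^bsub>Hgrp G N\<^esub> (a, b) = (inv a, inv b)"
  unfolding Hgrp_def
  using group.m_inv_consistent[OF DirProd_group[OF is_group is_group] subgroup_Hset]
  by (simp add: inv_DirProd[OF is_group is_group] Hset_iff)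

lemma Hset_mult_closed [simp]:
  "(a, b) \<in> Hset G N \<Longrightarrow> (c, d) \<in> Hset G N \<Longrightarrow> (a \<otimes> c, b \<otimes> d) \<in> Hset G N"
  using monoid.m_closed[OF monoid_Hgrp, of "(a, b)" "(c, d)"] by simp

lemma Delta_carrier [simp]: "carrier (Delta G) = {(g, g) | g. g \<in> carrier G}"
  by (simp add: Delta_def)

lemma Delta_mult [simp]: "(a, b) \<otimes>\<^bsub>Delta G\<^esub> (c, d) = (a \<otimes> c, b \<otimes> d)"
  by (simp add: Delta_def)

lemma psi_of_eq:
  "psi_of G p (a, b) (c, d) = snd p (conjg G (inv b \<otimes> a) d) (inv d \<otimes> c) / fst p d (inv b \<otimes> a)"
  by (simp add: psi_of_def Let_def)

lemma psi_of_Hset: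
  "g \<in> carrier G \<Longrightarrow> n \<in> carrier G \<Longrightarrow> k \<in> carrier G \<Longrightarrow> n' \<in> carrier G \<Longrightarrow>
   psi_of G p (g \<otimes> n, g) (k \<otimes> n', k) = snd p (conjg G n k) n' / fst p k n"
  by (simp add: psi_of_eq)

end

definition pair_mult :: "'a lampair \<Rightarrow> 'a lampair \<Rightarrow> 'a lampair" where
  "pair_mult p q = (\<lambda>g n. fst p g n * fst q g n, \<lambda>n n'. snd p n n' * snd q n n')"

lemma psi_of_pair_mult: "psi_of G (pair_mult p q) = (\<lambda>x y. psi_of G p x y * psi_of G q x y)"
  by (intro ext) (simp add: psi_of_def Let_def pair_mult_def times_divide_times_eq)

context jones
begin

lemma lam_equivI:
  assumes "\<And>n. n \<in> N \<Longrightarrow> \<eta> n \<in> circle" "\<eta> \<one> = 1"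
    and "\<And>g n. g \<in> carrier G \<Longrightarrow> n \<in> N \<Longrightarrow> fst q g n = fst p g n * (\<eta> n * cnj (\<eta> (conjg G n g)))"
    and "\<And>n n'. n \<in> N \<Longrightarrow> n' \<in> N \<Longrightarrow> snd q n n' = snd p n n' * (\<eta> (n \<otimes> n') * cnj (\<eta> n * \<eta> n'))"
  shows "lam_equiv G N p q"
  using assms unfolding lam_equiv_def by blast

lemma lam_equivE:
  assumes "lam_equiv G N p q"
  obtains \<eta> where "\<And>n. n \<in> N \<Longrightarrow> \<eta> n \<in> circle" "\<eta> \<one> = 1"
    and "\<And>g n. g \<in> carrier G \<Longrightarrow> n \<in> N \<Longrightarrow> fst q g n = fst p g n * (\<eta> n * cnj (\<eta> (conjg G n g)))"
    and "\<And>n n'. n \<in> N \<Longrightarrow> n' \<in> N \<Longrightarrow> snd q n n' = snd p n n' * (\<eta> (n \<otimes> n') * cnj (\<eta> n * \<eta> n'))"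
  using assms unfolding lam_equiv_def by blast

lemma lam_equiv_refl: "lam_equiv G N p p"
  by (rule lam_equivI[of "\<lambda>_. 1"]) simp_all

lemma lam_equiv_sym:
  assumes "lam_equiv G N p q"
  shows "lam_equiv G N q p"
proof -
  obtain \<eta> where \<eta>: "\<And>n. n \<in> N \<Longrightarrow> \<eta> n \<in> circle" "\<eta> \<one> = 1"
    and q: "\<And>g n. g \<in> carrier G \<Longrightarrow> n \<in> N \<Longrightarrow> fst q g n = fst p g n * (\<eta> n * cnj (\<eta> (conjg G n g)))"
      "\<And>n n'. n \<in> N \<Longrightarrow> n' \<in> N \<Longrightarrow> snd q n n' = snd p n n' * (\<eta> (n \<otimes> n') * cnj (\<eta> n * \<eta> n'))"
    by (rule lam_equivE[OF assms]) blast
  have \<eta>_nonzero: "\<And>n. n \<in> N \<Longrightarrow> \<eta> n \<noteq> 0"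
    and cnj_\<eta>: "\<And>n. n \<in> N \<Longrightarrow> cnj (\<eta> n) = 1 / \<eta> n"
    using \<eta>(1) circle_nonzero cnj_circle by blast+
  show ?thesis
    by (rule lam_equivI[of "\<lambda>n. cnj (\<eta> n)"])
      (simp_all add: \<eta> circle_divide q \<eta>_nonzero cnj_\<eta> field_simps)
qed

lemma lam_equiv_trans:
  assumes "lam_equiv G N p q" "lam_equiv G N q r"
  shows "lam_equiv G N p r"
proof -
  obtain \<eta> where \<eta>: "\<And>n. n \<in> N \<Longrightarrow> \<eta> n \<in> circle" "\<eta> \<one> = 1"
    and q: "\<And>g n. g \<in> carrier G \<Longrightarrow> n \<in> N \<Longrightarrow> fst q g n = fst p g n * (\<eta> n * cnj (\<eta> (conjg G n g)))"
      "\<And>n n'. n \<in> N \<Longrightarrow> n' \<in> N \<Longrightarrow> snd q n n' = snd p n n' * (\<eta> (n \<otimes> n') * cnj (\<eta> n * \<eta> n'))"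
    by (rule lam_equivE[OF assms(1)]) blast
  obtain \<zeta> where \<zeta>: "\<And>n. n \<in> N \<Longrightarrow> \<zeta> n \<in> circle" "\<zeta> \<one> = 1"
    and r: "\<And>g n. g \<in> carrier G \<Longrightarrow> n \<in> N \<Longrightarrow> fst r g n = fst q g n * (\<zeta> n * cnj (\<zeta> (conjg G n g)))"
      "\<And>n n'. n \<in> N \<Longrightarrow> n' \<in> N \<Longrightarrow> snd r n n' = snd q n n' * (\<zeta> (n \<otimes> n') * cnj (\<zeta> n * \<zeta> n'))"
    by (rule lam_equivE[OF assms(2)]) blast
  show ?thesis
    by (rule lam_equivI[of "\<lambda>n. \<eta> n * \<zeta> n"]) (simp_all add: \<eta> \<zeta> q r circle_mult mult_ac)
qed

lemma lam_equiv_pair_mult: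
  assumes "lam_equiv G N p p'" "lam_equiv G N q q'"
  shows "lam_equiv G N (pair_mult p q) (pair_mult p' q')"
proof -
  obtain \<eta> where \<eta>: "\<And>n. n \<in> N \<Longrightarrow> \<eta> n \<in> circle" "\<eta> \<one> = 1"
    and p': "\<And>g n. g \<in> carrier G \<Longrightarrow> n \<in> N \<Longrightarrow> fst p' g n = fst p g n * (\<eta> n * cnj (\<eta> (conjg G n g)))"
      "\<And>n n'. n \<in> N \<Longrightarrow> n' \<in> N \<Longrightarrow> snd p' n n' = snd p n n' * (\<eta> (n \<otimes> n') * cnj (\<eta> n * \<eta> n'))"
    by (rule lam_equivE[OF assms(1)]) blast
  obtain \<zeta> where \<zeta>: "\<And>n. n \<in> N \<Longrightarrow> \<zeta> n \<in> circle" "\<zeta> \<one> = 1"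
    and q': "\<And>g n. g \<in> carrier G \<Longrightarrow> n \<in> N \<Longrightarrow> fst q' g n = fst q g n * (\<zeta> n * cnj (\<zeta> (conjg G n g)))"
      "\<And>n n'. n \<in> N \<Longrightarrow> n' \<in> N \<Longrightarrow> snd q' n n' = snd q n n' * (\<zeta> (n \<otimes> n') * cnj (\<zeta> n * \<zeta> n'))"
    by (rule lam_equivE[OF assms(2)]) blast
  show ?thesis
    by (rule lam_equivI[of "\<lambda>n. \<eta> n * \<zeta> n"])
      (simp_all add: pair_mult_def \<eta> \<zeta> p' q' circle_mult mult_ac)
qed

lemma Zpairs_iff: "(la, mu) \<in> Zpairs G N \<longleftrightarrow>
     (\<forall>g\<in>carrier G. \<forall>n\<in>N. la g n \<in> circle) \<and>
     (\<forall>x\<in>N. \<forall>y\<in>N. mu x y \<in> circle) \<and>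
     (\<forall>x\<in>N. \<forall>y\<in>N. \<forall>z\<in>N. mu x y * mu (x \<otimes> y) z = mu y z * mu x (y \<otimes> z)) \<and>
     (\<forall>m\<in>N. \<forall>n\<in>N. la m n = mu m (conjg G n m) * cnj (mu n m)) \<and>
     (\<forall>g\<in>carrier G. \<forall>h\<in>carrier G. \<forall>n\<in>N. la (g \<otimes> h) n = la g n * la h (conjg G n g)) \<and>
     (\<forall>g\<in>carrier G. \<forall>m\<in>N. \<forall>n\<in>N.
        la g (m \<otimes> n) * cnj (la g m * la g n) = mu m n * cnj (mu (conjg G m g) (conjg G n g))) \<and>
     (\<forall>n\<in>N. la \<one> n = 1) \<and> (\<forall>g\<in>carrier G. la g \<one> = 1) \<and>
     (\<forall>n\<in>N. mu \<one> n = 1) \<and> (\<forall>n\<in>N. mu n \<one> = 1)"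
  by (simp add: Zpairs_def cocycles_def)

lemma Zpairs_pair_mult:
  assumes "p \<in> Zpairs G N" "q \<in> Zpairs G N"
  shows "pair_mult p q \<in> Zpairs G N"
proof -
  obtain la mu la' mu' where pq: "p = (la, mu)" "q = (la', mu')" by fastforce
  have Z: "(la, mu) \<in> Zpairs G N" "(la', mu') \<in> Zpairs G N" using assms pq by auto
  have mu: "(\<lambda>m n. mu m n * mu' m n) \<in> cocycles (G\<lparr>carrier := N\<rparr>)"
    using Z by (intro cocycles_mult) (simp_all add: Zpairs_def)
  have la: "la g (m \<otimes> n) * la' g (m \<otimes> n) * cnj (la g m * la' g m * (la g n * la' g n)) =
        mu m n * mu' m n * cnj (mu (conjg G m g) (conjg G n g) * mu' (conjg G m g) (conjg G n g))"
    if "g \<in> carrier G" "m \<in> N" "n \<in> N" for g m n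
  proof -
    have "la g (m \<otimes> n) * la' g (m \<otimes> n) * cnj (la g m * la' g m * (la g n * la' g n))
       = (la g (m \<otimes> n) * cnj (la g m * la g n)) * (la' g (m \<otimes> n) * cnj (la' g m * la' g n))"
      by (simp only: complex_cnj_mult mult_ac)
    also have "\<dots> = (mu m n * cnj (mu (conjg G m g) (conjg G n g))) *
        (mu' m n * cnj (mu' (conjg G m g) (conjg G n g)))"
      using Z that by (simp add: Zpairs_def)
    finally show ?thesis by (simp only: complex_cnj_mult mult_ac)
  qed
  show ?thesis
    unfolding pq pair_mult_def fst_conv snd_conv Zpairs_def mem_Collect_eq case_prod_conv
    by (intro conjI ballI) (use Z mu la in \<open>simp_all add: Zpairs_iff circle_mult mult_ac\<close>)
qed

lemma lam_class_eq: "lam_equiv G N p q \<Longrightarrow> lam_class G N p = lam_class G N q"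
  unfolding lam_class_def using lam_equiv_sym lam_equiv_trans by blast

lemma in_lam_class: "p \<in> Zpairs G N \<Longrightarrow> p \<in> lam_class G N p"
  by (simp add: lam_class_def lam_equiv_refl)

lemma some_lam_class:
  assumes "p \<in> Zpairs G N"
  shows "(SOME q. q \<in> lam_class G N p) \<in> Zpairs G N"
    and "lam_equiv G N p (SOME q. q \<in> lam_class G N p)"
  using someI[of "\<lambda>q. q \<in> lam_class G N p", OF in_lam_class[OF assms]]
  by (simp_all add: lam_class_def)

lemma Lambda_mult_lam_class:
  assumes "p \<in> Zpairs G N" "q \<in> Zpairs G N"
  shows "lam_class G N p \<otimes>\<^bsub>Lambda G N\<^esub> lam_class G N q = lam_class G N (pair_mult p q)"
proof -
  have "lam_equiv G N (pair_mult p q)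
      (pair_mult (SOME p'. p' \<in> lam_class G N p) (SOME q'. q' \<in> lam_class G N q))"
    using lam_equiv_pair_mult some_lam_class(2) assms by blast
  thus ?thesis by (simp add: Lambda_def Let_def pair_mult_def[symmetric] lam_class_eq)
qed

end

locale Zpair = jones +
  fixes la mu
  assumes in_Zpairs: "(la, mu) \<in> Zpairs G N"
begin

lemma la_circle: "g \<in> carrier G \<Longrightarrow> n \<in> N \<Longrightarrow> la g n \<in> circle"
  and mu_circle: "m \<in> N \<Longrightarrow> n \<in> N \<Longrightarrow> mu m n \<in> circle"
  and mu_cocycle: "x \<in> N \<Longrightarrow> y \<in> N \<Longrightarrow> z \<in> N \<Longrightarrow> mu x y * mu (x \<otimes> y) z = mu y z * mu x (y \<otimes> z)"
  and la_mult: "g \<in> carrier G \<Longrightarrow> h \<in> carrier G \<Longrightarrow> n \<in> N \<Longrightarrow> la (g \<otimes> h) n = la g n * la h (conjg G n g)"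
  and la_one_left [simp]: "n \<in> N \<Longrightarrow> la \<one> n = 1"
  and la_one_right [simp]: "g \<in> carrier G \<Longrightarrow> la g \<one> = 1"
  and mu_one_left [simp]: "n \<in> N \<Longrightarrow> mu \<one> n = 1"
  and mu_one_right [simp]: "n \<in> N \<Longrightarrow> mu n \<one> = 1"
  using in_Zpairs by (simp_all add: Zpairs_iff)

lemma la_nonzero: "g \<in> carrier G \<Longrightarrow> n \<in> N \<Longrightarrow> la g n \<noteq> 0"
  using la_circle circle_nonzero by blast

lemma mu_nonzero: "m \<in> N \<Longrightarrow> n \<in> N \<Longrightarrow> mu m n \<noteq> 0"
  using mu_circle circle_nonzero by blast

lemma la_N: "m \<in> N \<Longrightarrow> n \<in> N \<Longrightarrow> la m n = mu m (conjg G n m) / mu n m"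
  using in_Zpairs mu_circle by (simp add: Zpairs_iff cnj_circle)

lemma la_mult_right:
  assumes "g \<in> carrier G" "m \<in> N" "n \<in> N"
  shows "la g (m \<otimes> n) = la g m * la g n * mu m n / mu (conjg G m g) (conjg G n g)"
proof -
  have "la g (m \<otimes> n) * cnj (la g m * la g n) = mu m n * cnj (mu (conjg G m g) (conjg G n g))"
    using in_Zpairs assms by (simp add: Zpairs_iff)
  hence "la g (m \<otimes> n) / (la g m * la g n) = mu m n / mu (conjg G m g) (conjg G n g)"
    using assms la_circle mu_circle by (simp add: cnj_circle)
  thus ?thesis using assms la_nonzero mu_nonzero by (simp add: field_simps)
qed

abbreviation psi where "psi \<equiv> psi_of G (la, mu)"

lemma psi_diag_left: "k \<in> carrier G \<Longrightarrow> h \<in> carrier G \<Longrightarrow> psi (k, k) (h, h) = 1"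
  by (simp add: psi_of_eq)

lemma psi_diag_N: "k \<in> carrier G \<Longrightarrow> m \<in> N \<Longrightarrow> psi (k, k) (m, \<one>) = 1"
  by (simp add: psi_of_eq)

lemma psi_N_N: "n \<in> N \<Longrightarrow> n' \<in> N \<Longrightarrow> psi (n, \<one>) (n', \<one>) = mu n n'"
  by (simp add: psi_of_eq)

lemma psi_N_diag: "n \<in> N \<Longrightarrow> k \<in> carrier G \<Longrightarrow> psi (n, \<one>) (k, k) = 1 / la k n"
  by (simp add: psi_of_eq)

lemma psi_cocycle_identity:
  assumes carr: "g \<in> carrier G" "n \<in> N" "k \<in> carrier G" "n' \<in> N" "l \<in> carrier G" "n'' \<in> N"
  defines "x \<equiv> (g \<otimes> n, g)" and "y \<equiv> (k \<otimes> n', k)" and "z \<equiv> (l \<otimes> n'', l)"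
  shows "psi x y * psi (x \<otimes>\<^bsub>Hgrp G N\<^esub> y) z = psi y z * psi x (y \<otimes>\<^bsub>Hgrp G N\<^esub> z)"
proof -
  define a where "a = conjg G n k"
  define a' where "a' = conjg G n (k \<otimes> l)"
  define b where "b = conjg G n' l"
  have abN: "a \<in> N" "a' \<in> N" "b \<in> N" using carr by (simp_all add: a_def a'_def b_def)
  have xy: "x \<otimes>\<^bsub>Hgrp G N\<^esub> y = ((g \<otimes> k) \<otimes> (a \<otimes> n'), g \<otimes> k)"
    using carr Hset_mult_normal_form[of g n k n'] by (simp add: x_def y_def a_def)
  have yz: "y \<otimes>\<^bsub>Hgrp G N\<^esub> z = ((k \<otimes> l) \<otimes> (b \<otimes> n''), k \<otimes> l)"
    using carr Hset_mult_normal_form[of k n' l n''] by (simp add: y_def z_def b_def)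
  have "conjg G (a \<otimes> n') l = a' \<otimes> b" "conjg G a l = a'"
    using carr by (simp_all add: a_def a'_def b_def conjg_mult conjg_conjg)
  hence psi_xy_z: "psi (x \<otimes>\<^bsub>Hgrp G N\<^esub> y) z = mu (a' \<otimes> b) n'' / (la l a * la l n' * mu a n' / mu a' b)"
    unfolding xy z_def using carr abN by (simp add: psi_of_Hset la_mult_right b_def)
  have psi_x_yz: "psi x (y \<otimes>\<^bsub>Hgrp G N\<^esub> z) = mu a' (b \<otimes> n'') / (la k n * la l a)"
    unfolding yz x_def using carr abN by (simp add: psi_of_Hset la_mult a_def a'_def)
  have psi_x_y: "psi x y = mu a n' / la k n" and psi_y_z: "psi y z = mu b n'' / la l n'"
    using carr by (simp_all add: x_def y_def z_def psi_of_Hset a_def b_def)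
  have nonzero: "la k n \<noteq> 0" "la l a \<noteq> 0" "la l n' \<noteq> 0" "mu a n' \<noteq> 0" "mu a' b \<noteq> 0"
    using carr abN by (simp_all add: la_nonzero mu_nonzero)
  have "psi x y * psi (x \<otimes>\<^bsub>Hgrp G N\<^esub> y) z = mu a' b * mu (a' \<otimes> b) n'' / (la k n * la l a * la l n')"
    using nonzero by (simp add: psi_x_y psi_xy_z field_simps)
  also have "\<dots> = mu b n'' * mu a' (b \<otimes> n'') / (la k n * la l a * la l n')"
    using abN carr by (simp add: mu_cocycle)
  also have "\<dots> = psi y z * psi x (y \<otimes>\<^bsub>Hgrp G N\<^esub> z)"
    using nonzero by (simp add: psi_y_z psi_x_yz field_simps)
  finally show ?thesis .
qed

lemma psi_in_cocycles: "psi \<in> cocycles (Hgrp G N)"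
  unfolding cocycles_def
proof (intro CollectI conjI ballI)
  fix x y assume "x \<in> carrier (Hgrp G N)" "y \<in> carrier (Hgrp G N)"
  then obtain g n k n' where "x = (g \<otimes> n, g)" "y = (k \<otimes> n', k)"
    and "g \<in> carrier G" "n \<in> N" "k \<in> carrier G" "n' \<in> N"
    by (auto elim!: HsetE)
  thus "psi x y \<in> circle" by (simp add: psi_of_Hset circle_divide mu_circle la_circle)
next
  fix x y z assume "x \<in> carrier (Hgrp G N)" "y \<in> carrier (Hgrp G N)" "z \<in> carrier (Hgrp G N)"
  then obtain g n k n' l n'' where "x = (g \<otimes> n, g)" "y = (k \<otimes> n', k)" "z = (l \<otimes> n'', l)"
    and "g \<in> carrier G" "n \<in> N" "k \<in> carrier G" "n' \<in> N" "l \<in> carrier G" "n'' \<in> N"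
    by (auto elim!: HsetE)
  thus "psi x y * psi (x \<otimes>\<^bsub>Hgrp G N\<^esub> y) z = psi y z * psi x (y \<otimes>\<^bsub>Hgrp G N\<^esub> z)"
    using psi_cocycle_identity by simp
qed

lemma psi_Delta_trivial: "cohomologous (Delta G) (\<lambda>x y. 1) psi"
  by (rule cohomologous_if_agree) (auto simp: psi_diag_left)

lemma psi_beta_trivial:
  assumes "b \<in> N" "c \<in> N"
  shows "beta (Hgrp G N) psi (b, \<one>) (\<one>, c) = 1"
proof -
  define d where "d = conjg G b c"
  have dN: "d \<in> N" using assms by (simp add: d_def)
  have "c \<otimes> d = b \<otimes> c" using assms by (simp add: d_def conjg_def m_assoc[symmetric])
  moreover have "d \<otimes> inv c = inv c \<otimes> b" using assms by (simp add: d_def conjg_def m_assoc)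
  ultimately have i: "mu c d * mu (b \<otimes> c) (inv c) = mu d (inv c) * mu c (inv c \<otimes> b)"
    using mu_cocycle[of c d "inv c"] assms dN by simp
  have ii: "mu b c * mu (b \<otimes> c) (inv c) = mu c (inv c)"
    using mu_cocycle[of b c "inv c"] assms by (simp add: m_assoc)
  have iii: "mu c (inv c) = mu (inv c) b * mu c (inv c \<otimes> b)"
    using mu_cocycle[of c "inv c" b] assms by simp
  have "mu c d * mu (inv c) b * mu c (inv c \<otimes> b) * mu (b \<otimes> c) (inv c)
      = mu d (inv c) * mu b c * mu c (inv c \<otimes> b) * mu (b \<otimes> c) (inv c)"
    by (metis i ii iii mult.assoc mult.commute)
  hence key: "mu c d * mu (inv c) b = mu d (inv c) * mu b c"
    using assms by (simp add: mu_nonzero)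
  have "inv\<^bsub>Hgrp G N\<^esub> (b, \<one>) \<otimes>\<^bsub>Hgrp G N\<^esub> (\<one>, c) \<otimes>\<^bsub>Hgrp G N\<^esub> (b, \<one>) = (\<one>, c)"
    using assms by simp
  hence "beta (Hgrp G N) psi (b, \<one>) (\<one>, c) = mu d (inv c) / la c b * cnj (mu (inv c) b)"
    using assms by (simp add: beta_def psi_of_eq d_def)
  also have "\<dots> = mu d (inv c) * mu b c / (mu c d * mu (inv c) b)"
    using assms dN by (simp add: la_N d_def[symmetric] cnj_circle mu_circle mu_nonzero)
  finally show ?thesis
    using key assms dN by (simp add: mu_nonzero)
qed

lemma psi_class_in_GGN: "coh_class (Hgrp G N) psi \<in> carrier (GGN G N)"
  unfolding GGN_def GGN_carrier_def H2_def
  using psi_in_cocycles psi_Delta_trivial psi_beta_trivial by auto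

end

context jones
begin

lemma Zpair_if_in_Zpairs: "(la, mu) \<in> Zpairs G N \<Longrightarrow> Zpair N G la mu"
  by (intro Zpair.intro) (unfold_locales, simp add: Zpair_axioms_def)

lemma cohomologous_psi_of_if_lam_equiv:
  assumes "lam_equiv G N p q"
  shows "cohomologous (Hgrp G N) (psi_of G p) (psi_of G q)"
proof -
  obtain \<eta> where \<eta>: "\<And>n. n \<in> N \<Longrightarrow> \<eta> n \<in> circle"
    and q: "\<And>g n. g \<in> carrier G \<Longrightarrow> n \<in> N \<Longrightarrow> fst q g n = fst p g n * (\<eta> n * cnj (\<eta> (conjg G n g)))"
      "\<And>n n'. n \<in> N \<Longrightarrow> n' \<in> N \<Longrightarrow> snd q n n' = snd p n n' * (\<eta> (n \<otimes> n') * cnj (\<eta> n * \<eta> n'))"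
    by (rule lam_equivE[OF assms]) blast
  have \<eta>_nonzero: "\<And>n. n \<in> N \<Longrightarrow> \<eta> n \<noteq> 0"
    and cnj_\<eta>: "\<And>n. n \<in> N \<Longrightarrow> cnj (\<eta> n) = 1 / \<eta> n"
    using \<eta> circle_nonzero cnj_circle by blast+
  show ?thesis
  proof (rule cohomologousI[of _ "\<lambda>x. cnj (\<eta> (inv (snd x) \<otimes> fst x))"])
    fix x assume "x \<in> carrier (Hgrp G N)"
    thus "cnj (\<eta> (inv (snd x) \<otimes> fst x)) \<in> circle"
      using \<eta> by (metis Hgrp_carrier Hset_iff circle_cnj prod.collapse)
  next
    fix x y assume "x \<in> carrier (Hgrp G N)" "y \<in> carrier (Hgrp G N)"
    then obtain g n k n' where xy: "x = (g \<otimes> n, g)" "y = (k \<otimes> n', k)"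
      and carr: "g \<in> carrier G" "n \<in> N" "k \<in> carrier G" "n' \<in> N"
      by (auto elim!: HsetE)
    define a where "a = conjg G n k"
    have aN: "a \<in> N" using carr by (simp add: a_def)
    have "x \<otimes>\<^bsub>Hgrp G N\<^esub> y = ((g \<otimes> k) \<otimes> (a \<otimes> n'), g \<otimes> k)"
      using xy carr Hset_mult_normal_form[of g n k n'] by (simp add: a_def)
    thus "psi_of G q x y = psi_of G p x y * cnj (\<eta> (inv (snd x) \<otimes> fst x)) *
        cnj (\<eta> (inv (snd y) \<otimes> fst y)) / cnj (\<eta> (inv (snd (x \<otimes>\<^bsub>Hgrp G N\<^esub> y)) \<otimes> fst (x \<otimes>\<^bsub>Hgrp G N\<^esub> y)))"
      using xy carr aN
      by (simp add: psi_of_Hset a_def[symmetric] q cnj_\<eta> \<eta>_nonzero field_simps)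
  qed
qed

text \<open>Both cocycles vanish on (k, k) \<times> (m, 1), so the coboundary is multiplicative along
  (km, k) = (k, k)(m, 1).\<close>
lemma coboundary_psi_of_split:
  assumes "(la, mu) \<in> Zpairs G N" "(la', mu') \<in> Zpairs G N"
    and \<theta>: "\<And>x. x \<in> Hset G N \<Longrightarrow> \<theta> x \<in> circle"
    and rel: "\<And>x y. x \<in> Hset G N \<Longrightarrow> y \<in> Hset G N \<Longrightarrow>
      psi_of G (la', mu') x y = psi_of G (la, mu) x y * \<theta> x * \<theta> y / \<theta> (x \<otimes>\<^bsub>Hgrp G N\<^esub> y)"
    and "k \<in> carrier G" "m \<in> N"
  shows "\<theta> (k \<otimes> m, k) = \<theta> (k, k) * \<theta> (m, \<one>)"
proof -
  have "1 = 1 * \<theta> (k, k) * \<theta> (m, \<one>) / \<theta> (k \<otimes> m, k)"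
    using rel[of "(k, k)" "(m, \<one>)"] assms(5,6)
      Zpair.psi_diag_N[OF Zpair_if_in_Zpairs[OF assms(1)]] Zpair.psi_diag_N[OF Zpair_if_in_Zpairs[OF assms(2)]]
    by simp
  moreover have "\<theta> (k \<otimes> m, k) \<noteq> 0" using \<theta> assms(5,6) circle_nonzero by simp
  ultimately show ?thesis by (simp add: field_simps)
qed

lemma lam_equiv_if_cohomologous_psi_of:
  assumes P: "(la, mu) \<in> Zpairs G N" and Q: "(la', mu') \<in> Zpairs G N"
    and "cohomologous (Hgrp G N) (psi_of G (la, mu)) (psi_of G (la', mu'))"
  shows "lam_equiv G N (la, mu) (la', mu')"
proof -
  interpret p: Zpair N G la mu using P by (rule Zpair_if_in_Zpairs)
  interpret q: Zpair N G la' mu' using Q by (rule Zpair_if_in_Zpairs)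
  obtain \<theta> where \<theta>: "\<And>x. x \<in> Hset G N \<Longrightarrow> \<theta> x \<in> circle"
    and rel: "\<And>x y. x \<in> Hset G N \<Longrightarrow> y \<in> Hset G N \<Longrightarrow>
      psi_of G (la', mu') x y = psi_of G (la, mu) x y * \<theta> x * \<theta> y / \<theta> (x \<otimes>\<^bsub>Hgrp G N\<^esub> y)"
    by (rule cohomologousE[OF assms(3)]) auto
  note split = coboundary_psi_of_split[OF P Q \<theta> rel]
  have \<theta>_nonzero: "\<And>x. x \<in> Hset G N \<Longrightarrow> \<theta> x \<noteq> 0" using \<theta> circle_nonzero by blast
  define \<eta> where "\<eta> n = \<theta> (n, \<one>)" for n
  have \<eta>: "\<And>n. n \<in> N \<Longrightarrow> \<eta> n \<in> circle" using \<theta> by (simp add: \<eta>_def)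
  have \<eta>_nonzero: "\<And>n. n \<in> N \<Longrightarrow> \<eta> n \<noteq> 0"
    and cnj_\<eta>: "\<And>n. n \<in> N \<Longrightarrow> cnj (\<eta> n) = 1 / \<eta> n"
    using \<eta> circle_nonzero cnj_circle by blast+
  have "\<theta> (\<one>, \<one>) = \<theta> (\<one>, \<one>) * \<theta> (\<one>, \<one>)" using split[of \<one> \<one>] by simp
  hence \<eta>_one: "\<eta> \<one> = 1" using \<theta>_nonzero[of "(\<one>, \<one>)"] by (simp add: \<eta>_def)
  show ?thesis
  proof (rule lam_equivI[of "\<lambda>n. cnj (\<eta> n)"])
    fix g n assume gn: "g \<in> carrier G" "n \<in> N"
    have "(n, \<one>) \<otimes>\<^bsub>Hgrp G N\<^esub> (g, g) = (g \<otimes> conjg G n g, g)"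
      using gn mult_eq_mult_conjg[of n g] by simp
    hence "1 / la' g n = 1 / la g n * \<eta> n * \<theta> (g, g) / (\<theta> (g, g) * \<eta> (conjg G n g))"
      using rel[of "(n, \<one>)" "(g, g)"] gn split by (simp add: p.psi_N_diag q.psi_N_diag \<eta>_def)
    thus "fst (la', mu') g n = fst (la, mu) g n * (cnj (\<eta> n) * cnj (cnj (\<eta> (conjg G n g))))"
      using gn \<theta>_nonzero p.la_nonzero q.la_nonzero \<eta>_nonzero by (simp add: cnj_\<eta> field_simps)
  next
    fix n n' assume "n \<in> N" "n' \<in> N"
    thus "snd (la', mu') n n' = snd (la, mu) n n' * (cnj (\<eta> (n \<otimes> n')) * cnj (cnj (\<eta> n) * cnj (\<eta> n')))"
      using rel[of "(n, \<one>)" "(n', \<one>)"] \<eta>_nonzero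
      by (simp add: p.psi_N_N q.psi_N_N \<eta>_def[symmetric] cnj_\<eta> field_simps)
  qed (simp_all add: \<eta> \<eta>_one circle_cnj)
qed

end

locale well_chosen_cocycle = jones +
  fixes \<psi>
  assumes well_chosen: "well_chosen G N \<psi>"
begin

lemma cocycle: "\<psi> \<in> cocycles (Hgrp G N)"
  and diag_left: "g \<in> carrier G \<Longrightarrow> h \<in> Hset G N \<Longrightarrow> \<psi> (g, g) h = 1"
  and beta_N_N: "n \<in> N \<Longrightarrow> n' \<in> N \<Longrightarrow> beta (Hgrp G N) \<psi> (n, \<one>) (\<one>, n') = 1"
  using well_chosen by (simp_all add: well_chosen_def)

lemma circle: "x \<in> Hset G N \<Longrightarrow> y \<in> Hset G N \<Longrightarrow> \<psi> x y \<in> circle"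
  using cocyclesD(1)[OF cocycle] by simp

lemma nonzero: "x \<in> Hset G N \<Longrightarrow> y \<in> Hset G N \<Longrightarrow> \<psi> x y \<noteq> 0"
  using circle circle_nonzero by blast

lemma cocycle_identity:
  "x \<in> Hset G N \<Longrightarrow> y \<in> Hset G N \<Longrightarrow> z \<in> Hset G N \<Longrightarrow>
   \<psi> x y * \<psi> (x \<otimes>\<^bsub>Hgrp G N\<^esub> y) z = \<psi> y z * \<psi> x (y \<otimes>\<^bsub>Hgrp G N\<^esub> z)"
  using cocyclesD(2)[OF cocycle] by simp

lemma N_cocycle_identity:
  "x \<in> N \<Longrightarrow> y \<in> N \<Longrightarrow> z \<in> N \<Longrightarrow>
   \<psi> (x, \<one>) (y, \<one>) * \<psi> (x \<otimes> y, \<one>) (z, \<one>) = \<psi> (y, \<one>) (z, \<one>) * \<psi> (x, \<one>) (y \<otimes> z, \<one>)"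
  using cocycle_identity[of "(x, \<one>)" "(y, \<one>)" "(z, \<one>)"] by simp

lemma one_right: assumes "x \<in> Hset G N" shows "\<psi> x (\<one>, \<one>) = 1"
proof -
  have "\<psi> x (\<one>, \<one>) * \<psi> x (\<one>, \<one>) = \<psi> (\<one>, \<one>) (\<one>, \<one>) * \<psi> x (\<one>, \<one>)"
    using cocycle_identity[OF assms, of "(\<one>, \<one>)" "(\<one>, \<one>)"] assms
    by (cases x) (simp add: Hset_iff)
  thus ?thesis using diag_left[of \<one> "(\<one>, \<one>)"] nonzero[OF assms, of "(\<one>, \<one>)"] by simp
qed

lemma left_reduce:
  assumes "g \<in> carrier G" "n \<in> N" "y \<in> Hset G N"
  shows "\<psi> (g \<otimes> n, g) y = \<psi> (n, \<one>) y"
proof -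
  obtain c d where y: "y = (c, d)" by (cases y)
  have "\<psi> (g, g) (n, \<one>) * \<psi> ((g, g) \<otimes>\<^bsub>Hgrp G N\<^esub> (n, \<one>)) y =
        \<psi> (n, \<one>) y * \<psi> (g, g) ((n, \<one>) \<otimes>\<^bsub>Hgrp G N\<^esub> y)"
    using cocycle_identity[of "(g, g)" "(n, \<one>)" y] assms y by simp
  thus ?thesis using assms y by (simp add: diag_left)
qed

lemma decompose:
  assumes "g \<in> carrier G" "n \<in> N" "k \<in> carrier G" "n' \<in> N"
  shows "\<psi> (g \<otimes> n, g) (k \<otimes> n', k) = \<psi> (n, \<one>) (k, k) * \<psi> (conjg G n k, \<one>) (n', \<one>)"
proof -
  have "(n, \<one>) \<otimes>\<^bsub>Hgrp G N\<^esub> (k, k) = (k \<otimes> conjg G n k, k)"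
    using assms mult_eq_mult_conjg[of n k] by simp
  moreover have "\<psi> (n, \<one>) (k, k) * \<psi> ((n, \<one>) \<otimes>\<^bsub>Hgrp G N\<^esub> (k, k)) (n', \<one>) =
        \<psi> (k, k) (n', \<one>) * \<psi> (n, \<one>) ((k, k) \<otimes>\<^bsub>Hgrp G N\<^esub> (n', \<one>))"
    using cocycle_identity[of "(n, \<one>)" "(k, k)" "(n', \<one>)"] assms by simp
  ultimately show ?thesis using assms by (simp add: diag_left left_reduce)
qed

lemma beta_diag:
  assumes "g \<in> carrier G" "n \<in> N"
  shows "beta (Hgrp G N) \<psi> (g, g) (n, \<one>) = cnj (\<psi> (n, \<one>) (g, g))"
proof -
  have "(inv g \<otimes> n \<otimes> g, \<one>) \<in> Hset G N" using conjg_closed[OF assms(2,1)] by (simp add: conjg_def)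
  thus ?thesis using assms by (simp add: beta_def diag_left)
qed

lemma N_commute: assumes "n \<in> N" "m \<in> N" shows "\<psi> (n, \<one>) (\<one>, m) = \<psi> (\<one>, m) (n, \<one>)"
proof -
  have "\<psi> (n, \<one>) (\<one>, m) * cnj (\<psi> (\<one>, m) (n, \<one>)) = 1"
    using beta_N_N[OF assms] assms by (simp add: beta_def)
  moreover have "\<psi> (\<one>, m) (n, \<one>) \<in> circle" using circle assms by simp
  ultimately show ?thesis using circle_nonzero by (simp add: cnj_circle field_simps)
qed

lemma N_diag_cnj:
  assumes m: "m \<in> N" and n: "n \<in> N"
  shows "cnj (\<psi> (n, \<one>) (m, m)) = \<psi> (m, \<one>) (conjg G n m, \<one>) * cnj (\<psi> (n, \<one>) (m, \<one>))"
proof -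
  have mc: "m \<in> carrier G" "n \<in> carrier G" using assms by auto
  define P where "P = \<psi> (n, \<one>) (m, m)"
  define C where "C = \<psi> (inv m, \<one>) (n \<otimes> m, \<one>)"
  define D where "D = \<psi> (m, \<one>) (conjg G n m, \<one>)"
  define T where "T = \<psi> (inv m, \<one>) (m, \<one>)"
  define M where "M = \<psi> (n, \<one>) (m, \<one>)"
  have "\<psi> (n, \<one>) (\<one>, m) * \<psi> (n, m) (m, \<one>) = \<psi> (\<one>, m) (m, \<one>) * P"
    using cocycle_identity[of "(n, \<one>)" "(\<one>, m)" "(m, \<one>)"] assms by (simp add: P_def)
  moreover have "\<psi> (n, m) (m, \<one>) = \<psi> (inv m \<otimes> n, \<one>) (m, \<one>)"
    using left_reduce[of m "inv m \<otimes> n" "(m, \<one>)"] assms mc by simp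
  moreover have "\<psi> (\<one>, m) y = \<psi> (inv m, \<one>) y" if "y \<in> Hset G N" for y
    using left_reduce[of m "inv m" y] assms mc that by simp
  ultimately have "\<psi> (inv m, \<one>) (n, \<one>) * \<psi> (inv m \<otimes> n, \<one>) (m, \<one>) = T * P"
    using N_commute[OF n m] assms by (simp add: T_def)
  hence "T * P = M * C"
    using N_cocycle_identity[of "inv m" n m] assms mc by (simp add: M_def C_def m_assoc)
  moreover have "\<psi> (m, \<one>) (inv m, \<one>) = C * D"
    using N_cocycle_identity[of m "inv m" "n \<otimes> m"] assms mc
    by (simp add: C_def D_def conjg_def m_assoc diag_left)
  moreover have "\<psi> (m, \<one>) (inv m, \<one>) = T"
    using N_cocycle_identity[of m "inv m" m] assms mc by (simp add: T_def diag_left one_right)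
  ultimately have "C * (D * P) = C * M" by (simp add: mult_ac)
  hence "P * D = M" using assms by (simp add: C_def nonzero mult_ac)
  moreover have "P \<in> circle" "M \<in> circle" unfolding P_def M_def using circle assms by simp_all
  ultimately show ?thesis
    unfolding P_def[symmetric] D_def[symmetric] M_def[symmetric]
    using circle_nonzero by (simp add: cnj_circle field_simps)
qed

lemma N_diag_mult:
  assumes "g \<in> carrier G" "h \<in> carrier G" "n \<in> N"
  shows "\<psi> (n, \<one>) (g \<otimes> h, g \<otimes> h) = \<psi> (n, \<one>) (g, g) * \<psi> (conjg G n g, \<one>) (h, h)"
proof -
  have "(n, \<one>) \<otimes>\<^bsub>Hgrp G N\<^esub> (g, g) = (g \<otimes> conjg G n g, g)"
    using assms mult_eq_mult_conjg[of n g] by simp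
  moreover have "\<psi> (n, \<one>) (g, g) * \<psi> ((n, \<one>) \<otimes>\<^bsub>Hgrp G N\<^esub> (g, g)) (h, h) =
        \<psi> (g, g) (h, h) * \<psi> (n, \<one>) ((g, g) \<otimes>\<^bsub>Hgrp G N\<^esub> (h, h))"
    using cocycle_identity[of "(n, \<one>)" "(g, g)" "(h, h)"] assms by simp
  ultimately show ?thesis using assms by (simp add: diag_left left_reduce)
qed

lemma N_mult_diag:
  assumes "g \<in> carrier G" "m \<in> N" "n \<in> N"
  shows "\<psi> (m, \<one>) (n, \<one>) * \<psi> (m \<otimes> n, \<one>) (g, g) =
         \<psi> (n, \<one>) (g, g) * \<psi> (m, \<one>) (g, g) * \<psi> (conjg G m g, \<one>) (conjg G n g, \<one>)"
proof -
  have "\<psi> (m, \<one>) (n, \<one>) * \<psi> (m \<otimes> n, \<one>) (g, g) = \<psi> (n, \<one>) (g, g) * \<psi> (m, \<one>) (n \<otimes> g, g)"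
    using cocycle_identity[of "(m, \<one>)" "(n, \<one>)" "(g, g)"] assms by simp
  moreover have "\<psi> (m, \<one>) (g, g) * \<psi> (m \<otimes> g, g) (conjg G n g, \<one>) =
        \<psi> (g, g) (conjg G n g, \<one>) * \<psi> (m, \<one>) (g \<otimes> conjg G n g, g)"
    using cocycle_identity[of "(m, \<one>)" "(g, g)" "(conjg G n g, \<one>)"] assms by simp
  moreover have "\<psi> (m \<otimes> g, g) (conjg G n g, \<one>) = \<psi> (conjg G m g, \<one>) (conjg G n g, \<one>)"
    using left_reduce[of g "conjg G m g" "(conjg G n g, \<one>)"] assms mult_eq_mult_conjg[of m g] by simp
  moreover have "g \<otimes> conjg G n g = n \<otimes> g" using assms mult_eq_mult_conjg[of n g] by simp
  ultimately show ?thesis using assms by (simp add: diag_left mult_ac)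
qed

lemma lam_of_in_Zpairs: "lam_of G N \<psi> \<in> Zpairs G N"
proof -
  have mult_right: "cnj (\<psi> (m \<otimes> n, \<one>) (g, g)) * (\<psi> (m, \<one>) (g, g) * \<psi> (n, \<one>) (g, g)) =
      \<psi> (m, \<one>) (n, \<one>) * cnj (\<psi> (conjg G m g, \<one>) (conjg G n g, \<one>))"
    if "g \<in> carrier G" "m \<in> N" "n \<in> N" for g m n
    using N_mult_diag[OF that] circle that circle_nonzero by (simp add: cnj_circle field_simps)
  show ?thesis
    unfolding lam_of_def Zpairs_iff fst_conv snd_conv
    by (intro conjI ballI)
      (simp_all add: beta_diag circle circle_cnj N_cocycle_identity N_diag_cnj N_diag_mult
        mult_right diag_left one_right)
qed

lemma psi_of_lam_of:
  assumes "x \<in> Hset G N" "y \<in> Hset G N"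
  shows "psi_of G (lam_of G N \<psi>) x y = \<psi> x y"
proof -
  obtain g n k n' where "x = (g \<otimes> n, g)" "y = (k \<otimes> n', k)"
    and carr: "g \<in> carrier G" "n \<in> N" "k \<in> carrier G" "n' \<in> N"
    using assms by (auto elim!: HsetE)
  moreover have "\<psi> (n, \<one>) (k, k) \<in> circle" using circle carr by simp
  ultimately show ?thesis
    by (simp add: psi_of_Hset lam_of_def beta_diag decompose cnj_circle circle_nonzero)
qed

end

context jones
begin

lemma well_chosen_cocycle_if_well_chosen: "well_chosen G N \<psi> \<Longrightarrow> well_chosen_cocycle N G \<psi>"
  by (intro well_chosen_cocycle.intro) (unfold_locales, simp add: well_chosen_cocycle_axioms_def)

lemma exists_cohomologous_trivial_on_diag:
  assumes "\<psi> \<in> cocycles (Hgrp G N)" "cohomologous (Delta G) (\<lambda>x y. 1) \<psi>"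
  obtains \<psi>' where "\<psi>' \<in> cocycles (Hgrp G N)" "cohomologous (Hgrp G N) \<psi> \<psi>'"
    and "\<And>g k. g \<in> carrier G \<Longrightarrow> k \<in> carrier G \<Longrightarrow> \<psi>' (g, g) (k, k) = 1"
proof -
  obtain \<eta> where \<eta>: "\<And>x. x \<in> carrier (Delta G) \<Longrightarrow> \<eta> x \<in> circle"
    and \<psi>: "\<And>x y. x \<in> carrier (Delta G) \<Longrightarrow> y \<in> carrier (Delta G) \<Longrightarrow>
      \<psi> x y = 1 * \<eta> x * \<eta> y / \<eta> (x \<otimes>\<^bsub>Delta G\<^esub> y)"
    by (rule cohomologousE[OF assms(2)]) blast
  have \<eta>_diag: "\<And>g. g \<in> carrier G \<Longrightarrow> \<eta> (g, g) \<in> circle" using \<eta> by auto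
  define \<theta> where "\<theta> x = cnj (\<eta> (snd x, snd x))" for x :: "'a \<times> 'a"
  define \<psi>' where "\<psi>' x y = \<psi> x y * \<theta> x * \<theta> y / \<theta> (x \<otimes>\<^bsub>Hgrp G N\<^esub> y)" for x y
  have coh: "cohomologous (Hgrp G N) \<psi> \<psi>'"
    unfolding \<psi>'_def by (rule cohomologousI) (auto simp: \<theta>_def Hset_iff \<eta>_diag circle_cnj)
  moreover have "\<psi>' (g, g) (k, k) = 1" if "g \<in> carrier G" "k \<in> carrier G" for g k
    using \<psi>[of "(g, g)" "(k, k)"] that \<eta>_diag[of g] \<eta>_diag[of k] \<eta>_diag[of "g \<otimes> k"]
    by (auto simp: \<psi>'_def \<theta>_def cnj_circle circle_nonzero)
  ultimately show thesis
    using that cocycles_cohomologous[OF monoid_Hgrp assms(1) coh] by blast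
qed

lemma exists_well_chosen_cohomologous:
  assumes "\<psi> \<in> cocycles (Hgrp G N)" "cohomologous (Delta G) (\<lambda>x y. 1) \<psi>"
    and "\<forall>n\<in>N. \<forall>n'\<in>N. beta (Hgrp G N) \<psi> (n, \<one>) (\<one>, n') = 1"
  obtains \<psi>'' where "well_chosen G N \<psi>''" "cohomologous (Hgrp G N) \<psi> \<psi>''"
proof -
  obtain \<psi>' where \<psi>': "\<psi>' \<in> cocycles (Hgrp G N)" "cohomologous (Hgrp G N) \<psi> \<psi>'"
    and diag: "\<And>g k. g \<in> carrier G \<Longrightarrow> k \<in> carrier G \<Longrightarrow> \<psi>' (g, g) (k, k) = 1"
    using exists_cohomologous_trivial_on_diag[OF assms(1,2)] by blast
  define \<theta> where "\<theta> x = \<psi>' (snd x, snd x) (inv (snd x) \<otimes> fst x, \<one>)" for x :: "'a \<times> 'a"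
  define \<psi>'' where "\<psi>'' x y = \<psi>' x y * \<theta> x * \<theta> y / \<theta> (x \<otimes>\<^bsub>Hgrp G N\<^esub> y)" for x y
  have "cohomologous (Hgrp G N) \<psi>' \<psi>''"
    unfolding \<psi>''_def
    by (rule cohomologousI) (auto simp: \<theta>_def Hset_iff intro: cocyclesD(1)[OF \<psi>'(1)])
  hence coh: "cohomologous (Hgrp G N) \<psi> \<psi>''" and "\<psi>'' \<in> cocycles (Hgrp G N)"
    using cohomologous_trans[OF \<psi>'(2)] cocycles_cohomologous[OF monoid_Hgrp \<psi>'(1)] by blast+
  moreover have "\<psi>'' (g, g) h = 1" if g: "g \<in> carrier G" and h: "h \<in> Hset G N" for g h
  proof -
    obtain k n where hk: "h = (k \<otimes> n, k)" "k \<in> carrier G" "n \<in> N" using h by (auto elim: HsetE)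
    have iv: "inv (g \<otimes> k) \<otimes> (g \<otimes> (k \<otimes> n)) = n" using hk g by (simp add: inv_mult_group m_assoc)
    have "\<psi>' (g, g) (k, k) * \<psi>' (g \<otimes> k, g \<otimes> k) (n, \<one>) = \<psi>' (k, k) (n, \<one>) * \<psi>' (g, g) h"
      using cocyclesD(2)[OF \<psi>'(1), of "(g, g)" "(k, k)" "(n, \<one>)"] g hk by simp
    moreover have "\<psi>' (g \<otimes> k, g \<otimes> k) (n, \<one>) \<noteq> 0"
      using cocyclesD(1)[OF \<psi>'(1)] circle_nonzero g hk by simp
    ultimately show ?thesis
      using diag[of g \<one>] diag[OF g hk(2)] g hk by (simp add: \<psi>''_def \<theta>_def iv field_simps)
  qed
  moreover have "beta (Hgrp G N) \<psi>'' (n, \<one>) (\<one>, n') = 1" if "n \<in> N" "n' \<in> N" for n n'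
    using beta_cohomologous[OF group_Hgrp coh, of "(n, \<one>)" "(\<one>, n')"] assms(3) that by simp
  ultimately have "well_chosen G N \<psi>''" by (simp add: well_chosen_def)
  thus thesis using coh by (rule that)
qed

end

definition Lambda_to_GGN :: "('a, 'b) monoid_scheme \<Rightarrow> 'a set \<Rightarrow> 'a lampair set \<Rightarrow> ('a \<times> 'a \<Rightarrow> 'a \<times> 'a \<Rightarrow> complex) set"
  where "Lambda_to_GGN G N A = coh_class (Hgrp G N) (psi_of G (SOME p. p \<in> A))"

context jones
begin

lemma carrier_Lambda: "carrier (Lambda G N) = lam_class G N ` Zpairs G N"
  by (simp add: Lambda_def)

lemma psi_of_in_cocycles: "p \<in> Zpairs G N \<Longrightarrow> psi_of G p \<in> cocycles (Hgrp G N)"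
  by (cases p) (simp add: Zpair.psi_in_cocycles[OF Zpair_if_in_Zpairs])

lemma Lambda_to_GGN_lam_class:
  assumes "p \<in> Zpairs G N"
  shows "Lambda_to_GGN G N (lam_class G N p) = coh_class (Hgrp G N) (psi_of G p)"
  using coh_class_eq[OF monoid_Hgrp cohomologous_psi_of_if_lam_equiv[OF some_lam_class(2)[OF assms]]]
  by (simp add: Lambda_to_GGN_def)

lemma Lambda_to_GGN_hom: "Lambda_to_GGN G N \<in> hom (Lambda G N) (GGN G N)"
proof (rule homI)
  fix A assume "A \<in> carrier (Lambda G N)"
  then obtain p where "p \<in> Zpairs G N" "A = lam_class G N p" by (auto simp: carrier_Lambda)
  thus "Lambda_to_GGN G N A \<in> carrier (GGN G N)"
    by (cases p) (simp add: Lambda_to_GGN_lam_class Zpair.psi_class_in_GGN[OF Zpair_if_in_Zpairs])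
next
  fix A B assume "A \<in> carrier (Lambda G N)" "B \<in> carrier (Lambda G N)"
  then obtain p q where pq: "p \<in> Zpairs G N" "q \<in> Zpairs G N"
    and AB: "A = lam_class G N p" "B = lam_class G N q"
    by (auto simp: carrier_Lambda)
  have "Lambda_to_GGN G N (A \<otimes>\<^bsub>Lambda G N\<^esub> B) = coh_class (Hgrp G N) (psi_of G (pair_mult p q))"
    using pq by (simp add: AB Lambda_mult_lam_class Lambda_to_GGN_lam_class Zpairs_pair_mult)
  also have "\<dots> = Lambda_to_GGN G N A \<otimes>\<^bsub>H2 (Hgrp G N)\<^esub> Lambda_to_GGN G N B"
    using pq by (simp add: AB Lambda_to_GGN_lam_class H2_mult_coh_class[OF monoid_Hgrp]
        psi_of_in_cocycles psi_of_pair_mult)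
  finally show "Lambda_to_GGN G N (A \<otimes>\<^bsub>Lambda G N\<^esub> B) = Lambda_to_GGN G N A \<otimes>\<^bsub>GGN G N\<^esub> Lambda_to_GGN G N B"
    by (simp add: GGN_def)
qed

lemma inj_on_Lambda_to_GGN: "inj_on (Lambda_to_GGN G N) (carrier (Lambda G N))"
proof (rule inj_onI)
  fix A B assume "A \<in> carrier (Lambda G N)" "B \<in> carrier (Lambda G N)"
    and eq: "Lambda_to_GGN G N A = Lambda_to_GGN G N B"
  then obtain la mu la' mu' where Z: "(la, mu) \<in> Zpairs G N" "(la', mu') \<in> Zpairs G N"
    and AB: "A = lam_class G N (la, mu)" "B = lam_class G N (la', mu')"
    by (auto simp: carrier_Lambda)
  have "cohomologous (Hgrp G N) (psi_of G (la, mu)) (psi_of G (la', mu'))"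
    using eq Z by (intro cohomologous_if_coh_class_eq psi_of_in_cocycles) (simp_all add: AB Lambda_to_GGN_lam_class)
  thus "A = B" using Z by (simp add: AB lam_class_eq lam_equiv_if_cohomologous_psi_of)
qed

lemma Lambda_to_GGN_lam_of:
  assumes "well_chosen G N \<psi>"
  shows "lam_class G N (lam_of G N \<psi>) \<in> carrier (Lambda G N)"
    and "Lambda_to_GGN G N (lam_class G N (lam_of G N \<psi>)) = coh_class (Hgrp G N) \<psi>"
proof -
  interpret well_chosen_cocycle N G \<psi> using assms by (rule well_chosen_cocycle_if_well_chosen)
  show "lam_class G N (lam_of G N \<psi>) \<in> carrier (Lambda G N)"
    by (simp add: carrier_Lambda lam_of_in_Zpairs)
  have "cohomologous (Hgrp G N) (psi_of G (lam_of G N \<psi>)) \<psi>"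
    by (rule cohomologous_if_agree) (simp add: psi_of_lam_of)
  thus "Lambda_to_GGN G N (lam_class G N (lam_of G N \<psi>)) = coh_class (Hgrp G N) \<psi>"
    by (simp add: Lambda_to_GGN_lam_class lam_of_in_Zpairs coh_class_eq[OF monoid_Hgrp])
qed

lemma Lambda_to_GGN_image: "Lambda_to_GGN G N ` carrier (Lambda G N) = carrier (GGN G N)"
proof
  show "Lambda_to_GGN G N ` carrier (Lambda G N) \<subseteq> carrier (GGN G N)"
    using hom_carrier[OF Lambda_to_GGN_hom] .
next
  show "carrier (GGN G N) \<subseteq> Lambda_to_GGN G N ` carrier (Lambda G N)"
  proof
    fix C assume "C \<in> carrier (GGN G N)"
    then obtain \<psi> where "\<psi> \<in> cocycles (Hgrp G N)" "C = coh_class (Hgrp G N) \<psi>"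
      "cohomologous (Delta G) (\<lambda>x y. 1) \<psi>"
      "\<forall>n\<in>N. \<forall>n'\<in>N. beta (Hgrp G N) \<psi> (n, \<one>) (\<one>, n') = 1"
      by (auto simp: GGN_def GGN_carrier_def)
    moreover obtain \<psi>' where "well_chosen G N \<psi>'" "cohomologous (Hgrp G N) \<psi> \<psi>'"
      using exists_well_chosen_cohomologous calculation(1,3,4) by blast
    ultimately show "C \<in> Lambda_to_GGN G N ` carrier (Lambda G N)"
      using Lambda_to_GGN_lam_of coh_class_eq[OF monoid_Hgrp] by (metis image_eqI)
  qed
qed

lemma Lambda_to_GGN_iso: "Lambda_to_GGN G N \<in> iso (Lambda G N) (GGN G N)"
  unfolding iso_def bij_betw_def
  using Lambda_to_GGN_hom inj_on_Lambda_to_GGN Lambda_to_GGN_image by simp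

end

theorem claim4:
  fixes G :: "('a, 'b) monoid_scheme" and N :: "'a set"
  assumes "group G" and "finite (carrier G)" and "N \<lhd> G"
  shows "\<exists>\<phi>. \<phi> \<in> iso (Lambda G N) (GGN G N)
     \<and> (\<forall>p \<in> Zpairs G N. \<phi> (lam_class G N p) = coh_class (Hgrp G N) (psi_of G p))
     \<and> (\<forall>\<psi>. well_chosen G N \<psi> \<longrightarrow>
           inv_into (carrier (Lambda G N)) \<phi> (coh_class (Hgrp G N) \<psi>) = lam_class G N (lam_of G N \<psi>))"
proof -
  interpret jones N G using assms(3) by (simp add: jones_def)
  have "inv_into (carrier (Lambda G N)) (Lambda_to_GGN G N) (coh_class (Hgrp G N) \<psi>) = lam_class G N (lam_of G N \<psi>)"
    if "well_chosen G N \<psi>" for \<psi>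
    using inv_into_f_eq[OF inj_on_Lambda_to_GGN Lambda_to_GGN_lam_of[OF that]] .
  thus ?thesis
    using Lambda_to_GGN_iso Lambda_to_GGN_lam_class by blast
qed

end
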